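(* Let $A\in\mathbb{C}^{m\times n}$ and $X\in\mathbb{C}^{n\times m}$. Then the following are equivalent: (1) $X\in A\{1,3^{\mathfrak{m}}\}$; (2) $A^{\sim}AX=A^{\sim}$; (3) $AX=P_{\mathcal{R}(A),\mathcal{N}(A^{\sim})}$. In this case, $$A\{1,3^{\mathfrak{m}}\}=\left\{A^{(1,3^{\mathfrak{m}})}+(I_n-A^{(1,3^{\mathfrak{m}})}A)Y : Y\in\mathbb{C}^{n\times m}\right\},$$ where $A^{(1,3^{\mathfrak{m}})}\in A\{1,3^{\mathfrak{m}}\}$ is fixed but arbitrary.
   Context: For a positive integer $k$, the Minkowski metric matrix of order $k$ is $G_k=\mathrm{diag}(1,-I_{k-1})$ (with $G_1=(1)$). For $A\in\mathbb{C}^{m\times n}$, the Minkowski adjoint is $A^{\sim}=G_nA^*G_m$, where $A^*$ is the conjugate transpose. For $A\in\mathbb{C}^{m\times n}$ and $X\in\mathbb{C}^{n\times m}$ consider the equations $(1)\ AXA=A$, $(2)\ XAX=X$, $(3^{\mathfrak{m}})\ (AX)^{\sim}=AX$, $(4^{\mathfrak{m}})\ (XA)^{\sim}=XA$; $A\{i,\dots,k\}$ denotes the set of all $X$ satisfying the listed equations. $\mathcal{R}(\cdot)$ and $\mathcal{N}(\cdot)$ denote range and null space. For subspaces $\mathcal{S},\mathcal{T}\subseteq\mathbb{C}^m$ with $\mathcal{S}\oplus\mathcal{T}=\mathbb{C}^m$, $P_{\mathcal{S},\mathcal{T}}$ denotes the projector onto $\mathcal{S}$ along $\mathcal{T}$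 (statement (3) includes that this direct sum holds). *)

theory Defs
  imports "Jordan_Normal_Form.Matrix" "Jordan_Normal_Form.Matrix_Kernel"
begin

definition minkowski_G :: "nat \<Rightarrow> complex mat" where
  "minkowski_G k = mat k k (\<lambda>(i,j). if i = j then (if i = 0 then 1 else -1) else 0)"

definition conj_transpose :: "complex mat \<Rightarrow> complex mat" where
  "conj_transpose A = mat (dim_col A) (dim_row A) (\<lambda>(i,j). cnj (A $$ (j,i)))"

definition mink_adj :: "complex mat \<Rightarrow> complex mat" where
  "mink_adj A = minkowski_G (dim_col A) * conj_transpose A * minkowski_G (dim_row A)"

definition mat_range :: "complex mat \<Rightarrow> complex vec set" where
  "mat_range A = {A *\<^sub>v x | x. x \<in> carrier_vec (dim_col A)}"

definition inv_1_3m :: "complex mat \<Rightarrow> complex mat set" where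
  "inv_1_3m A = {X \<in> carrier_mat (dim_col A) (dim_row A).
      A * X * A = A \<and> mink_adj (A * X) = A * X}"

definition is_proj_onto_along :: "nat \<Rightarrow> complex mat \<Rightarrow> complex vec set \<Rightarrow> complex vec set \<Rightarrow> bool" where
  "is_proj_onto_along k P S T \<longleftrightarrow>
     P \<in> carrier_mat k k \<and> S \<subseteq> carrier_vec k \<and> T \<subseteq> carrier_vec k \<and>
     S \<inter> T = {0\<^sub>v k} \<and> (\<forall>v \<in> carrier_vec k. \<exists>s \<in> S. \<exists>t \<in> T. v = s + t) \<and>
     (\<forall>s \<in> S. P *\<^sub>v s = s) \<and> (\<forall>t \<in> T. P *\<^sub>v t = 0\<^sub>v k)"

end

theory Submission
  imports Defs
begin

text \<open>
  Since (AB)~ = B~ A~ and A~~ = A, the Minkowski adjoint can replace the conjugate transpose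
  in the Penrose equations. Applying ~ to AXA = A gives A~ = A~ AX when AX is self-adjoint;
  applying it to A~ AX = A~ gives A = X~ A~ A, from which AXA = A and (AX)~ = X~ A~ A X = AX.
  Then AX is idempotent with range R(A) (as AXA = A) and kernel N(A~) (as AX = X~ A~ and
  A~ AX = A~), hence the projector onto R(A) along N(A~); conversely, if AX is that projector,
  then A~ AX = A~ because A~ annihilates the component that AX discards. By uniqueness of
  projectors all X in A{1,3m} give the same AX, and the solutions of AX = AZ for a
  {1}-inverse Z are exactly Z + (I - ZA) Y.
\<close>

lemma assoc_mult_mat_dim:
  "dim_col A = dim_row B \<Longrightarrow> dim_col B = dim_row C \<Longrightarrow> A * B * C = A * (B * C)"
  by (rule assoc_mult_mat[of A "dim_row A" "dim_col A" B "dim_col B" C "dim_col C"]) auto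

lemma eq_mat_mult_vecI:
  fixes A B :: "'a :: semiring_1 mat"
  assumes A: "A \<in> carrier_mat nr nc" and B: "B \<in> carrier_mat nr nc"
    and eq: "\<And>v. v \<in> carrier_vec nc \<Longrightarrow> A *\<^sub>v v = B *\<^sub>v v"
  shows "A = B"
proof (rule eq_matI)
  fix i j assume i: "i < dim_row B" and j: "j < dim_col B"
  have "A $$ (i, j) = (A *\<^sub>v unit_vec nc j) $ i" using A B i j by auto
  also have "\<dots> = (B *\<^sub>v unit_vec nc j) $ i" by (simp add: eq)
  also have "\<dots> = B $$ (i, j)" using B i j by auto
  finally show "A $$ (i, j) = B $$ (i, j)" .
qed (use A B in auto)

lemma generalized_inverse_solutions:
  fixes A Z :: "'a :: comm_ring_1 mat"
  assumes A: "A \<in> carrier_mat m n" and Z: "Z \<in> carrier_mat n m" and AZA: "A * Z * A = A"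
  shows "{X \<in> carrier_mat n m. A * X = A * Z}
    = {Z + (1\<^sub>m n - Z * A) * Y | Y. Y \<in> carrier_mat n m}"
proof (intro equalityI subsetI)
  have ZA: "Z * A \<in> carrier_mat n n" using A Z by auto
  fix X assume "X \<in> {X \<in> carrier_mat n m. A * X = A * Z}"
  then have X: "X \<in> carrier_mat n m" and AX: "A * X = A * Z" by auto
  have XZ: "X - Z \<in> carrier_mat n m" using Z by (rule minus_carrier_mat)
  have "Z * A * (X - Z) = Z * A * X - Z * A * Z"
    using ZA X Z by (rule mult_minus_distrib_mat)
  also have "Z * A * X = Z * A * Z" using A X Z AX by simp
  finally have ZAXZ: "Z * A * (X - Z) = 0\<^sub>m n m" using Z ZA by simp
  have "(1\<^sub>m n - Z * A) * (X - Z) = 1\<^sub>m n * (X - Z) - Z * A * (X - Z)"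
    using one_carrier_mat ZA XZ by (rule minus_mult_distrib_mat)
  also have "\<dots> = X - Z"
    unfolding ZAXZ left_mult_one_mat[OF XZ] using X Z by (intro eq_matI) auto
  finally have "X = Z + (1\<^sub>m n - Z * A) * (X - Z)" using X Z by (intro eq_matI) auto
  then show "X \<in> {Z + (1\<^sub>m n - Z * A) * Y | Y. Y \<in> carrier_mat n m}" using XZ by blast
next
  fix X assume "X \<in> {Z + (1\<^sub>m n - Z * A) * Y | Y. Y \<in> carrier_mat n m}"
  then obtain Y where Y: "Y \<in> carrier_mat n m" and X: "X = Z + (1\<^sub>m n - Z * A) * Y" by auto
  have ZA: "Z * A \<in> carrier_mat n n" using A Z by auto
  have IZA: "1\<^sub>m n - Z * A \<in> carrier_mat n n" using ZA by (rule minus_carrier_mat)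
  have "A * (1\<^sub>m n - Z * A) = A * 1\<^sub>m n - A * (Z * A)"
    using A one_carrier_mat ZA by (rule mult_minus_distrib_mat)
  also have "\<dots> = 0\<^sub>m m n" using A Z AZA by simp
  finally have "A * ((1\<^sub>m n - Z * A) * Y) = 0\<^sub>m m m"
    using A IZA Y by (simp flip: assoc_mult_mat[OF A IZA Y])
  then have "A * X = A * Z"
    unfolding X using A Z IZA Y by (simp add: mult_add_distrib_mat[of _ m n])
  then show "X \<in> {X \<in> carrier_mat n m. A * X = A * Z}" unfolding X using Z IZA Y by auto
qed

lemma mat_range_mult_subset:
  assumes "A \<in> carrier_mat m k" and "B \<in> carrier_mat k n"
  shows "mat_range (A * B) \<subseteq> mat_range A"
  using assms unfolding mat_range_def by (force intro!: mult_mat_vec_carrier)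

lemma is_proj_onto_along_mult_vec:
  assumes "is_proj_onto_along k P S T" and "s \<in> S" and "t \<in> T"
  shows "P *\<^sub>v (s + t) = s"
proof -
  have P: "P \<in> carrier_mat k k" and "s \<in> carrier_vec k" "t \<in> carrier_vec k"
    using assms unfolding is_proj_onto_along_def by auto
  then have "P *\<^sub>v (s + t) = P *\<^sub>v s + P *\<^sub>v t" by (simp add: mult_add_distrib_mat_vec)
  also have "\<dots> = s + 0\<^sub>v k" using assms unfolding is_proj_onto_along_def by auto
  finally show ?thesis using \<open>s \<in> carrier_vec k\<close> by simp
qed

lemma is_proj_onto_along_unique:
  assumes P: "is_proj_onto_along k P S T" and Q: "is_proj_onto_along k Q S T"
  shows "P = Q"
proof (rule eq_mat_mult_vecI)
  fix v :: "complex vec" assume "v \<in> carrier_vec k"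
  then obtain s t where "s \<in> S" and "t \<in> T" and "v = s + t"
    using P unfolding is_proj_onto_along_def by blast
  then show "P *\<^sub>v v = Q *\<^sub>v v" using is_proj_onto_along_mult_vec P Q by simp
qed (use P Q in \<open>auto simp: is_proj_onto_along_def\<close>)

lemma is_proj_onto_along_kernel_mult:
  assumes P: "is_proj_onto_along k P S (mat_kernel B)" and B: "B \<in> carrier_mat n k"
  shows "B * P = B"
proof (rule eq_mat_mult_vecI)
  fix v :: "complex vec" assume "v \<in> carrier_vec k"
  then obtain s t where st: "s \<in> S" "t \<in> mat_kernel B" and v: "v = s + t"
    using P unfolding is_proj_onto_along_def by blast
  have "s \<in> carrier_vec k" and "t \<in> carrier_vec k" and "B *\<^sub>v t = 0\<^sub>v n"
    using P st B unfolding is_proj_onto_along_def mat_kernel_def by auto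
  then have "B *\<^sub>v v = B *\<^sub>v s" unfolding v using B by (simp add: mult_add_distrib_mat_vec)
  also have "\<dots> = B *\<^sub>v (P *\<^sub>v v)" unfolding v using is_proj_onto_along_mult_vec[OF P st] by simp
  finally show "(B * P) *\<^sub>v v = B *\<^sub>v v"
    using B P \<open>v \<in> carrier_vec k\<close> unfolding is_proj_onto_along_def by auto
qed (use P B in \<open>auto simp: is_proj_onto_along_def\<close>)

lemma idempotent_is_proj_onto_along:
  assumes P: "P \<in> carrier_mat k k" and idem: "P * P = P"
  shows "is_proj_onto_along k P (mat_range P) (mat_kernel P)"
proof -
  have fixed: "P *\<^sub>v s = s" if s: "s \<in> mat_range P" for s
  proof -
    obtain u where u: "u \<in> carrier_vec k" "s = P *\<^sub>v u"
      using s unfolding mat_range_def carrier_matD[OF P] by auto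
    then show ?thesis using P by (simp flip: assoc_mult_mat_vec add: idem)
  qed
  have range: "P *\<^sub>v v \<in> mat_range P" if "v \<in> carrier_vec k" for v
    using that P unfolding mat_range_def by auto
  have kernel: "v - P *\<^sub>v v \<in> mat_kernel P" if v: "v \<in> carrier_vec k" for v
  proof (rule mat_kernelI[OF P])
    show "P *\<^sub>v (v - P *\<^sub>v v) = 0\<^sub>v k"
      using fixed[OF range[OF v]] P v by (auto simp: mult_minus_distrib_mat_vec)
  qed (use P v in auto)
  have "P *\<^sub>v 0\<^sub>v k = 0\<^sub>v k" using P by auto
  then have "mat_range P \<inter> mat_kernel P = {0\<^sub>v k}"
    using fixed range[of "0\<^sub>v k"] P unfolding mat_kernel_def by auto
  moreover have "\<exists>s \<in> mat_range P. \<exists>t \<in> mat_kernel P. v = s + t" if v: "v \<in> carrier_vec k" for v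
    using range[OF v] kernel[OF v] P v
    by (intro bexI[of _ "P *\<^sub>v v"] bexI[of _ "v - P *\<^sub>v v"]) auto
  moreover have "mat_range P \<subseteq> carrier_vec k"
    using P unfolding mat_range_def by auto
  ultimately show ?thesis unfolding is_proj_onto_along_def
    using P fixed mat_kernel_carrier[OF P] mat_kernelD(2)[OF P] by blast
qed

lemma conj_transpose_carrier_mat [simp]:
  "A \<in> carrier_mat m n \<Longrightarrow> conj_transpose A \<in> carrier_mat n m"
  unfolding conj_transpose_def by auto

lemma dim_conj_transpose [simp]:
  "dim_row (conj_transpose A) = dim_col A" "dim_col (conj_transpose A) = dim_row A"
  unfolding conj_transpose_def by auto

lemma conj_transpose_conj_transpose [simp]: "conj_transpose (conj_transpose A) = A"
  unfolding conj_transpose_def by (intro eq_matI) auto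

lemma conj_transpose_mult:
  assumes "A \<in> carrier_mat m k" and "B \<in> carrier_mat k n"
  shows "conj_transpose (A * B) = conj_transpose B * conj_transpose A"
  using assms unfolding conj_transpose_def
  by (intro eq_matI) (auto simp: scalar_prod_def cnj_sum mult.commute)

lemma conj_transpose_minkowski_G [simp]: "conj_transpose (minkowski_G k) = minkowski_G k"
  unfolding conj_transpose_def minkowski_G_def by (intro eq_matI) auto

lemma minkowski_G_carrier [simp]: "minkowski_G k \<in> carrier_mat k k"
  unfolding minkowski_G_def by auto

lemma dim_minkowski_G [simp]: "dim_row (minkowski_G k) = k" "dim_col (minkowski_G k) = k"
  unfolding minkowski_G_def by auto

lemma minkowski_G_mult_self: "minkowski_G k * minkowski_G k = 1\<^sub>m k"
proof (rule eq_matI)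
  fix i j assume ij: "i < dim_row (1\<^sub>m k)" "j < dim_col (1\<^sub>m k)"
  let ?g = "\<lambda>l. minkowski_G k $$ (i, l) * minkowski_G k $$ (l, j)"
  have "(minkowski_G k * minkowski_G k) $$ (i, j) = (\<Sum>l<k. ?g l)"
    using ij by (auto simp: scalar_prod_def atLeast0LessThan)
  also have "\<dots> = (\<Sum>l\<in>{i}. ?g l)"
    using ij by (intro sum.mono_neutral_right) (auto simp: minkowski_G_def)
  also have "\<dots> = 1\<^sub>m k $$ (i, j)"
    using ij by (auto simp: minkowski_G_def)
  finally show "(minkowski_G k * minkowski_G k) $$ (i, j) = 1\<^sub>m k $$ (i, j)" .
qed auto

lemma mink_adj_carrier_mat [simp]: "A \<in> carrier_mat m n \<Longrightarrow> mink_adj A \<in> carrier_mat n m"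
  unfolding mink_adj_def by auto

lemma dim_mink_adj [simp]: "dim_row (mink_adj A) = dim_col A" "dim_col (mink_adj A) = dim_row A"
  unfolding mink_adj_def by auto

lemma mink_adj_mult:
  assumes A: "A \<in> carrier_mat m k" and B: "B \<in> carrier_mat k n"
  shows "mink_adj (A * B) = mink_adj B * mink_adj A"
proof -
  let ?G = minkowski_G
  have "mink_adj (A * B) = ?G n * (conj_transpose B * conj_transpose A) * ?G m"
    using A B by (simp add: mink_adj_def conj_transpose_mult)
  also have "\<dots> = ?G n * conj_transpose B * (?G k * ?G k) * conj_transpose A * ?G m"
    using A B by (simp add: assoc_mult_mat_dim minkowski_G_mult_self)
  also have "\<dots> = mink_adj B * mink_adj A"
    using A B unfolding mink_adj_def by (simp add: assoc_mult_mat_dim)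
  finally show ?thesis .
qed

lemma mink_adj_mink_adj [simp]: "mink_adj (mink_adj A) = A"
proof -
  let ?G = minkowski_G
  obtain m n where A: "A \<in> carrier_mat m n" by auto
  have "conj_transpose (?G n * conj_transpose A * ?G m)
      = ?G m * conj_transpose (?G n * conj_transpose A)"
    using A by (intro trans[OF conj_transpose_mult[of _ n m _ m]]) (auto intro: mult_carrier_mat)
  also have "conj_transpose (?G n * conj_transpose A) = A * ?G n"
    using A conj_transpose_mult[of "?G n" n n "conj_transpose A" m] by auto
  finally have "mink_adj (mink_adj A) = ?G m * (?G m * (A * ?G n)) * ?G n"
    using A by (simp add: mink_adj_def)
  also have "\<dots> = (?G m * ?G m) * A * (?G n * ?G n)"
    using A by (simp add: assoc_mult_mat_dim)
  finally show ?thesis using A by (simp add: minkowski_G_mult_self)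
qed

lemma inv_1_3m_altdef:
  assumes "A \<in> carrier_mat m n"
  shows "inv_1_3m A = {X \<in> carrier_mat n m. A * X * A = A \<and> mink_adj (A * X) = A * X}"
  using assms unfolding inv_1_3m_def by auto

text \<open>The name mink_normal_eq refers to A~ A X = A~, the Minkowski analogue of the normal
  equations A* A X = A* that characterise {1,3}-inverses.\<close>

lemma mink_normal_eq_if_inv_1_3m:
  assumes A: "A \<in> carrier_mat m n" and X: "X \<in> carrier_mat n m"
    and AXA: "A * X * A = A" and selfadj: "mink_adj (A * X) = A * X"
  shows "mink_adj A * A * X = mink_adj A"
proof -
  have "mink_adj A = mink_adj (A * X * A)" using AXA by simp
  also have "\<dots> = mink_adj A * mink_adj (A * X)"
    using A X by (intro mink_adj_mult[of _ m m _ n]) auto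
  also have "\<dots> = mink_adj A * A * X"
    by (simp add: selfadj assoc_mult_mat_dim carrier_matD[OF A] carrier_matD[OF X])
  finally show ?thesis by simp
qed

lemma inv_1_3m_if_mink_normal_eq:
  assumes A: "A \<in> carrier_mat m n" and X: "X \<in> carrier_mat n m"
    and eq: "mink_adj A * A * X = mink_adj A"
  shows "A * X * A = A" and "mink_adj (A * X) = A * X"
proof -
  have Aa: "mink_adj A \<in> carrier_mat n m" and Xa: "mink_adj X \<in> carrier_mat m n"
    using A X by auto
  have "A = mink_adj (mink_adj A * A * X)" using eq by simp
  also have "\<dots> = mink_adj X * mink_adj (mink_adj A * A)"
    using A X Aa by (intro mink_adj_mult[of _ n n _ m]) auto
  also have "mink_adj (mink_adj A * A) = mink_adj A * A"
    using A Aa by (simp add: mink_adj_mult[of _ n m _ n])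
  finally have A_eq: "mink_adj X * (mink_adj A * A) = A" by simp
  have "A * X * A = mink_adj X * (mink_adj A * A) * X * A" by (simp only: A_eq)
  also have "\<dots> = mink_adj X * ((mink_adj A * A * X) * A)"
    by (simp add: assoc_mult_mat_dim carrier_matD[OF A] carrier_matD[OF X])
  also have "\<dots> = A" unfolding eq by (rule A_eq)
  finally show "A * X * A = A" .
  have "mink_adj (A * X) = mink_adj X * (mink_adj A * A * X)"
    using A X by (simp add: mink_adj_mult eq)
  also have "\<dots> = mink_adj X * (mink_adj A * A) * X"
    by (simp add: assoc_mult_mat_dim carrier_matD[OF A] carrier_matD[OF X])
  also have "\<dots> = A * X" by (simp only: A_eq)
  finally show "mink_adj (A * X) = A * X" .
qed

lemma inv_1_3m_iff_mink_normal_eq: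
  assumes "A \<in> carrier_mat m n" and "X \<in> carrier_mat n m"
  shows "X \<in> inv_1_3m A \<longleftrightarrow> mink_adj A * A * X = mink_adj A"
  unfolding inv_1_3m_altdef[OF assms(1)]
  using assms mink_normal_eq_if_inv_1_3m[OF assms] inv_1_3m_if_mink_normal_eq[OF assms] by auto

lemma mink_normal_eq_iff_is_proj_onto_along:
  assumes A: "A \<in> carrier_mat m n" and X: "X \<in> carrier_mat n m"
  shows "mink_adj A * A * X = mink_adj A \<longleftrightarrow>
    is_proj_onto_along m (A * X) (mat_range A) (mat_kernel (mink_adj A))"
proof
  assume eq: "mink_adj A * A * X = mink_adj A"
  note AXA = inv_1_3m_if_mink_normal_eq(1)[OF A X eq]
    and selfadj = inv_1_3m_if_mink_normal_eq(2)[OF A X eq]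
  have AX: "A * X \<in> carrier_mat m m" and Aa: "mink_adj A \<in> carrier_mat n m"
    and Xa: "mink_adj X \<in> carrier_mat m n"
    using A X by auto
  have "A * X * (A * X) = A * X"
    using A X by (simp flip: assoc_mult_mat_dim add: AXA carrier_matD[OF A] carrier_matD[OF X])
  then have "is_proj_onto_along m (A * X) (mat_range (A * X)) (mat_kernel (A * X))"
    using AX by (rule idempotent_is_proj_onto_along[rotated])
  moreover have "mat_range (A * X) = mat_range A"
  proof
    show "mat_range (A * X) \<subseteq> mat_range A" using A X by (rule mat_range_mult_subset)
    have "mat_range (A * X * A) \<subseteq> mat_range (A * X)" using AX A by (rule mat_range_mult_subset)
    then show "mat_range A \<subseteq> mat_range (A * X)" by (simp only: AXA)
  qed
  moreover have "mat_kernel (A * X) = mat_kernel (mink_adj A)"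
  proof
    have "mat_kernel (mink_adj A) \<subseteq> mat_kernel (mink_adj X * mink_adj A)"
      using Aa Xa by (rule mat_kernel_mult_subset)
    then show "mat_kernel (mink_adj A) \<subseteq> mat_kernel (A * X)"
      using A X selfadj by (simp add: mink_adj_mult)
    have "mat_kernel (A * X) \<subseteq> mat_kernel (mink_adj A * (A * X))"
      using AX Aa by (rule mat_kernel_mult_subset)
    then show "mat_kernel (A * X) \<subseteq> mat_kernel (mink_adj A)"
      using A X Aa by (simp flip: assoc_mult_mat add: eq)
  qed
  ultimately show "is_proj_onto_along m (A * X) (mat_range A) (mat_kernel (mink_adj A))"
    by simp
next
  assume "is_proj_onto_along m (A * X) (mat_range A) (mat_kernel (mink_adj A))"
  then have "mink_adj A * (A * X) = mink_adj A"
    using A by (intro is_proj_onto_along_kernel_mult) auto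
  then show "mink_adj A * A * X = mink_adj A"
    by (simp add: assoc_mult_mat_dim carrier_matD[OF A] carrier_matD[OF X])
qed

lemma inv_1_3m_eq_solutions:
  assumes A: "A \<in> carrier_mat m n" and Z: "Z \<in> inv_1_3m A"
  shows "inv_1_3m A = {X \<in> carrier_mat n m. A * X = A * Z}"
proof -
  let ?P = "\<lambda>X. is_proj_onto_along m (A * X) (mat_range A) (mat_kernel (mink_adj A))"
  have Zc: "Z \<in> carrier_mat n m" using Z unfolding inv_1_3m_altdef[OF A] by auto
  have PZ: "?P Z"
    using Z Zc inv_1_3m_iff_mink_normal_eq[OF A] mink_normal_eq_iff_is_proj_onto_along[OF A] by blast
  have "X \<in> inv_1_3m A \<longleftrightarrow> ?P X" if "X \<in> carrier_mat n m" for X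
    using that inv_1_3m_iff_mink_normal_eq[OF A] mink_normal_eq_iff_is_proj_onto_along[OF A] by blast
  moreover have "?P X \<longleftrightarrow> A * X = A * Z" for X
    using PZ is_proj_onto_along_unique by metis
  moreover have "inv_1_3m A \<subseteq> carrier_mat n m"
    unfolding inv_1_3m_altdef[OF A] by auto
  ultimately show ?thesis by blast
qed

theorem theorem4p3:
  fixes A X :: "complex mat" and m n :: nat
  assumes "0 < m" and "0 < n"
    and "A \<in> carrier_mat m n" and "X \<in> carrier_mat n m"
  shows "(X \<in> inv_1_3m A \<longleftrightarrow> mink_adj A * A * X = mink_adj A)
       \<and> (mink_adj A * A * X = mink_adj A \<longleftrightarrow>
            is_proj_onto_along m (A * X) (mat_range A) (mat_kernel (mink_adj A)))
       \<and> (\<forall>Z \<in> inv_1_3m A. inv_1_3m A =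
            {Z + (1\<^sub>m n - Z * A) * Y | Y. Y \<in> carrier_mat n m})"
proof (intro conjI ballI)
  note A = \<open>A \<in> carrier_mat m n\<close> and X = \<open>X \<in> carrier_mat n m\<close>
  show "X \<in> inv_1_3m A \<longleftrightarrow> mink_adj A * A * X = mink_adj A"
    using A X by (rule inv_1_3m_iff_mink_normal_eq)
  show "mink_adj A * A * X = mink_adj A \<longleftrightarrow>
      is_proj_onto_along m (A * X) (mat_range A) (mat_kernel (mink_adj A))"
    using A X by (rule mink_normal_eq_iff_is_proj_onto_along)
  fix Z assume Z: "Z \<in> inv_1_3m A"
  then have "Z \<in> carrier_mat n m" and "A * Z * A = A"
    unfolding inv_1_3m_altdef[OF A] by auto
  then show "inv_1_3m A = {Z + (1\<^sub>m n - Z * A) * Y | Y. Y \<in> carrier_mat n m}"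
    unfolding inv_1_3m_eq_solutions[OF A Z] by (rule generalized_inverse_solutions[OF A])
qed

end
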